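(* Let $q$ be a prime power and $n,d$ integers with $1\leq d\leq n-1$. Then the design $\mathrm{PG}_d(n,q)$ is strongly additive under $\mathbb{Z}_{q^d}^{[n+1]_q}$, where $[m]_q=\frac{q^m-1}{q-1}$.
   Context: $\mathrm{PG}_d(n,q)$ is the design whose points are the points of the projective geometry $\mathrm{PG}(n,q)$ over $\mathbb{F}_q$ and whose blocks are the point sets of all $d$-dimensional projective subspaces; it has $[n+1]_q$ points and block size $[d+1]_q$. A subset of an abelian group $G$ is zero-sum if the sum of its elements is $0$. A design $(V,\mathscr B)$ with block size $k$ is strongly additive under $G$ if there is an injective map $f:V\to G$ such that, for every $k$-subset $S\subseteq V$, $S\in\mathscr B$ if and only if $f(S)$ is zero-sum. *)

theory Defs
  imports "HOL-Analysis.Analysis" "HOL-Algebra.Product_Groups" "HOL-Algebra.FiniteProduct"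
begin

text \<open>Projective geometry PG(n,q): the underlying vector space is \<open>'a^'n\<close> with
 \<open>'a\<close> a finite field of order q and CARD('n) = n+1.  A point is a 1-dimensional
 subspace (as a set of vectors); a d-dimensional projective subspace is a
 (d+1)-dimensional linear subspace, and the corresponding block is the set of
 points it contains.\<close>

definition PG_points :: "('a::field ^ 'n) set set" where
  "PG_points = {W. vec.subspace W \<and> vec.dim W = 1}"

definition PG_blocks :: "nat \<Rightarrow> ('a::field ^ 'n) set set set" where
  "PG_blocks d = {{P \<in> PG_points. P \<subseteq> W} | W. vec.subspace W \<and> vec.dim W = d + 1}"

definition q_number :: "nat \<Rightarrow> nat \<Rightarrow> nat" where
  "q_number q m = (q ^ m - 1) div (q - 1)"

definition zero_sum :: "('g, 'c) monoid_scheme \<Rightarrow> 'g set \<Rightarrow> bool" where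
  "zero_sum G X \<longleftrightarrow> finprod G (\<lambda>x. x) X = \<one>\<^bsub>G\<^esub>"

definition strongly_additive ::
  "('g, 'c) monoid_scheme \<Rightarrow> 'v set \<Rightarrow> 'v set set \<Rightarrow> nat \<Rightarrow> bool" where
  "strongly_additive G V B k \<longleftrightarrow>
     (\<exists>f. f \<in> V \<rightarrow> carrier G \<and> inj_on f V \<and>
          (\<forall>S. S \<subseteq> V \<and> card S = k \<longrightarrow> (S \<in> B \<longleftrightarrow> zero_sum G (f ` S))))"

definition Zmod_power :: "nat \<Rightarrow> nat \<Rightarrow> (nat \<Rightarrow> int) monoid" where
  "Zmod_power m N = product_group {..<N} (\<lambda>_. integer_mod_group m)"

end

theory Submission
  imports Defs
begin

text \<open>A point P of PG(n,q) is encoded by the 0/1 vector recording which hyperplanes orth Q,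
  for Q ranging over the points, do not contain P. Distinct points are separated by a
  hyperplane, so the encoding is injective, and the image of S is zero-sum iff every
  hyperplane misses a multiple of q^d points of S. A (d+1)-space lies in a hyperplane or
  meets it in a d-space, so it misses 0 or [d+1]_q - [d]_q = q^d of its points. Conversely,
  since [d+1]_q < 2 q^d, a set S of [d+1]_q points with the divisibility property misses
  0 or q^d points of every hyperplane; double counting then shows that exactly q^(n-d)
  vectors are orthogonal to S, so S spans a space of dimension at most d+1, whose
  [d+1]_q points must be exactly S.\<close>

section \<open>Orthogonality in finite-dimensional vector spaces\<close>

definition dot :: "'a::field ^ 'n \<Rightarrow> 'a ^ 'n \<Rightarrow> 'a" where
  "dot x y = (\<Sum>i\<in>UNIV. x$i * y$i)"

definition orth :: "('a::field ^ 'n) set \<Rightarrow> ('a ^ 'n) set" where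
  "orth X = {y. \<forall>x\<in>X. dot x y = 0}"

lemma dot_comm: "dot x y = dot y x"
  by (simp add: dot_def mult.commute)

lemma dot_add_right: "dot x (y + z) = dot x y + dot x z"
  by (simp add: dot_def distrib_left sum.distrib)

lemma dot_diff_right: "dot x (y - z) = dot x y - dot x z"
  by (simp add: dot_def right_diff_distrib sum_subtractf)

lemma dot_scale_right: "dot x (c *s y) = c * dot x y"
  by (simp add: dot_def sum_distrib_left algebra_simps)

lemma dot_axis_right: "dot x (axis i 1) = x$i"
  by (simp add: dot_def axis_def if_distrib cong: if_cong)

lemma dot_zero_right [simp]: "dot x 0 = 0"
  by (simp add: dot_def)

lemma dot_zero_left [simp]: "dot 0 y = 0"
  by (simp add: dot_def)

lemma subspace_orth: "vec.subspace (orth X)"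
  unfolding vec.subspace_def orth_def by (auto simp: dot_add_right dot_scale_right)

lemma span_subset_orth_iff: "vec.span X \<subseteq> orth Y \<longleftrightarrow> X \<subseteq> orth Y"
  using vec.span_minimal[OF _ subspace_orth] vec.span_superset by blast

lemma orth_Union: "orth (\<Union>\<S>) = (\<Inter>X\<in>\<S>. orth X)"
  by (auto simp: orth_def)

lemma subset_orth_commute: "X \<subseteq> orth Y \<longleftrightarrow> Y \<subseteq> orth X"
  unfolding orth_def by (simp add: subset_iff) (metis dot_comm)

lemma orth_span: "orth (vec.span X) = orth X"
  by (metis span_subset_orth_iff subset_orth_commute subset_antisym order_refl)

lemma ex_dot_eq_on_independent:
  fixes B :: "('a::field ^ 'n) set"
  assumes "vec.independent B"
  shows "\<exists>u. \<forall>b\<in>B. dot b u = g b"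
proof -
  interpret p: vector_space_pair "(*s) :: 'a \<Rightarrow> 'a^'n \<Rightarrow> 'a^'n" "(*) :: 'a \<Rightarrow> 'a \<Rightarrow> 'a"
    by unfold_locales
  define F where "F = p.construct B g"
  interpret F: Vector_Spaces.linear "(*s) :: 'a \<Rightarrow> 'a^'n \<Rightarrow> 'a^'n" "(*) :: 'a \<Rightarrow> 'a \<Rightarrow> 'a" F
    unfolding F_def by (rule p.linear_construct) (use assms in simp)
  define u :: "'a^'n" where "u = (\<chi> i. F (axis i 1))"
  have dot_u: "dot x u = F x" for x
  proof -
    have "F x = F (\<Sum>i\<in>UNIV. x$i *s axis i 1)" by (simp add: basis_expansion)
    also have "\<dots> = dot x u" by (simp add: F.sum F.scale dot_def u_def)
    finally show ?thesis by simp
  qed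
  have F_B: "F b = g b" if "b \<in> B" for b
    unfolding F_def by (rule p.construct_basis) (use assms that in simp_all)
  show ?thesis
    using dot_u F_B by (intro exI[of _ u]) simp
qed

lemma card_subspace:
  fixes V :: "('a::{field,finite} ^ 'n) set"
  assumes "vec.subspace V"
  shows "card V = CARD('a) ^ vec.dim V"
proof -
  obtain B where B: "B \<subseteq> V" "vec.independent B" "V \<subseteq> vec.span B" "card B = vec.dim V"
    using vec.basis_exists by blast
  have V: "V = vec.span B"
    using B assms vec.span_minimal by blast
  have independent: "\<forall>c. (\<Sum>v\<in>B. c v *s v) = 0 \<longrightarrow> (\<forall>v\<in>B. c v = 0)"
    using B(2) vec.independent_explicit by blast
  define F where "F c = (\<Sum>v\<in>B. c v *s v)" for c :: "'a^'n \<Rightarrow> 'a"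
  have "inj_on F (B \<rightarrow>\<^sub>E UNIV)"
  proof (rule inj_onI)
    fix c c' assume c: "c \<in> B \<rightarrow>\<^sub>E UNIV" "c' \<in> B \<rightarrow>\<^sub>E UNIV" "F c = F c'"
    then have "(\<Sum>v\<in>B. (c v - c' v) *s v) = 0"
      by (simp add: F_def vec.scale_left_diff_distrib sum_subtractf)
    then have "\<forall>v\<in>B. c v - c' v = 0"
      using independent[rule_format, of "\<lambda>v. c v - c' v"] by blast
    then show "c = c'" by (intro PiE_ext[OF c(1,2)]) auto
  qed
  moreover have "F ` (B \<rightarrow>\<^sub>E UNIV) = V"
  proof
    show "F ` (B \<rightarrow>\<^sub>E UNIV) \<subseteq> V"
      unfolding F_def using B(1)
      by (auto intro!: vec.subspace_sum[OF assms] vec.subspace_scale[OF assms])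
    show "V \<subseteq> F ` (B \<rightarrow>\<^sub>E UNIV)"
    proof
      fix x assume "x \<in> V"
      then obtain c where "x = (\<Sum>v\<in>B. c v *s v)"
        unfolding V vec.span_finite[OF finite] by auto
      then have "x = F (restrict c B)" by (simp add: F_def)
      then show "x \<in> F ` (B \<rightarrow>\<^sub>E UNIV)" by auto
    qed
  qed
  ultimately have "card V = card (B \<rightarrow>\<^sub>E (UNIV :: 'a set))"
    by (metis card_image)
  then show ?thesis using B(4) by (simp add: card_PiE)
qed

text \<open>Every vector of V splits uniquely as a vector of the hyperplane section plus a
  multiple of a fixed w with dot u w = 1.\<close>
lemma card_subspace_Int_hyperplane:
  fixes V :: "('a::{field,finite} ^ 'n) set"
  assumes "vec.subspace V" "\<not> V \<subseteq> orth {u}"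
  shows "card (V \<inter> orth {u}) * CARD('a) = card V"
proof -
  obtain v where v: "v \<in> V" "dot u v \<noteq> 0" using assms(2) by (auto simp: orth_def)
  define w where "w = inverse (dot u v) *s v"
  have w: "w \<in> V" "dot u w = 1"
    using v assms(1) by (auto simp: w_def dot_scale_right vec.subspace_def)
  let ?K = "V \<inter> orth {u}"
  have "bij_betw (\<lambda>(k, c). k + c *s w) (?K \<times> UNIV) V"
  proof (rule bij_betw_byWitness[where f' = "\<lambda>x. (x - dot u x *s w, dot u x)"])
    show "\<forall>a\<in>?K \<times> UNIV. (\<lambda>x. (x - dot u x *s w, dot u x)) ((\<lambda>(k, c). k + c *s w) a) = a"
      using w by (auto simp: orth_def dot_add_right dot_scale_right)
    show "\<forall>x\<in>V. (\<lambda>(k, c). k + c *s w) (x - dot u x *s w, dot u x) = x"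
      by auto
    show "(\<lambda>(k, c). k + c *s w) ` (?K \<times> UNIV) \<subseteq> V"
      using w assms(1) by (auto simp: vec.subspace_def)
    show "(\<lambda>x. (x - dot u x *s w, dot u x)) ` V \<subseteq> ?K \<times> UNIV"
      using w assms(1)
      by (auto simp: orth_def dot_diff_right dot_scale_right intro!: vec.subspace_diff vec.subspace_scale)
  qed
  then have "card V = card (?K \<times> (UNIV :: 'a set))"
    by (simp add: bij_betw_same_card)
  then show ?thesis by (simp add: card_cartesian_product)
qed

lemma card_orth_singleton:
  fixes p :: "'a::{field,finite} ^ 'n"
  assumes "p \<noteq> 0"
  shows "card (orth {p}) * CARD('a) = CARD('a) ^ CARD('n)"
proof -
  obtain i where "p $ i \<noteq> 0" using assms by (metis vec_eq_iff zero_index)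
  then have "axis i 1 \<notin> orth {p}" by (simp add: orth_def dot_axis_right)
  then have "\<not> UNIV \<subseteq> orth {p}" by blast
  then show ?thesis
    using card_subspace_Int_hyperplane[of UNIV p] by simp
qed

text \<open>The map (t, g) \<mapsto> t + U g, with U g realising the values g on a basis of X,
  is injective on orth X \<times> (basis \<rightarrow> field).\<close>
lemma card_orth_mult_le:
  fixes X :: "('a::{field,finite} ^ 'n) set"
  shows "card (orth X) * CARD('a) ^ vec.dim X \<le> CARD('a) ^ CARD('n)"
proof -
  obtain B where B: "B \<subseteq> X" "vec.independent B" "card B = vec.dim X"
    by (meson vec.basis_exists)
  have "\<forall>g. \<exists>u. \<forall>b\<in>B. dot b u = g b"
    using ex_dot_eq_on_independent[OF B(2)] by blast
  from choice[OF this] obtain U where U: "\<And>g b. b \<in> B \<Longrightarrow> dot b (U g) = g b"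
    by blast
  have "inj_on (\<lambda>(t, g). t + U g) (orth X \<times> (B \<rightarrow>\<^sub>E UNIV))"
  proof (rule inj_onI, clarify)
    fix t g t' g'
    assume tg: "t \<in> orth X" "g \<in> B \<rightarrow>\<^sub>E UNIV" "t' \<in> orth X" "g' \<in> B \<rightarrow>\<^sub>E UNIV"
      and eq: "t + U g = t' + U g'"
    have "g b = g' b" if "b \<in> B" for b
      using arg_cong[OF eq, of "dot b"] tg(1,3) B(1) that
      by (auto simp: dot_add_right U orth_def)
    then have "g = g'" by (intro PiE_ext[OF tg(2,4)])
    then show "t = t' \<and> g = g'" using eq by simp
  qed
  then have "card (orth X \<times> (B \<rightarrow>\<^sub>E (UNIV :: 'a set))) \<le> card (UNIV :: ('a^'n) set)"
    by (rule card_inj_on_le) auto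
  then show ?thesis
    using B(3) by (simp add: card_cartesian_product card_PiE)
qed

section \<open>Gaussian numbers and points of PG(n,q)\<close>

lemma q_number_Suc:
  assumes "2 \<le> q"
  shows "q_number q (Suc m) = q_number q m + q ^ m"
proof -
  have "1 \<le> q ^ m" using assms by simp
  then have "q ^ Suc m - 1 = (q ^ m - 1) + (q - 1) * q ^ m"
    using assms by (simp add: algebra_simps)
  then have "q_number q (Suc m) = ((q ^ m - 1) + (q - 1) * q ^ m) div (q - 1)"
    by (simp only: q_number_def)
  also have "\<dots> = q ^ m + q_number q m"
    unfolding q_number_def by (rule div_mult_self2) (use assms in simp)
  finally show ?thesis by simp
qed

lemma q_number_mult:
  assumes "2 \<le> q"
  shows "q_number q m * (q - 1) = q ^ m - 1"
proof (induction m)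
  case 0
  then show ?case by (simp add: q_number_def)
next
  case (Suc m)
  have "1 \<le> q ^ m" using assms by simp
  then show ?case
    using Suc assms by (simp add: q_number_Suc algebra_simps)
qed

lemma q_number_less_power:
  assumes "2 \<le> q"
  shows "q_number q m < q ^ m"
proof (induction m)
  case 0
  then show ?case by (simp add: q_number_def)
next
  case (Suc m)
  then have "q_number q (Suc m) < q ^ m + q ^ m"
    using assms by (simp add: q_number_Suc)
  also have "\<dots> \<le> q ^ Suc m"
    using mult_right_mono[OF assms, of "q ^ m"] by (simp only: mult_2 power_Suc)
  finally show ?case .
qed

lemma strict_mono_q_number: "2 \<le> q \<Longrightarrow> strict_mono (q_number q)"
  by (simp add: strict_mono_Suc_iff q_number_Suc)

lemma two_le_card_field: "2 \<le> CARD('a::{field,finite})"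
proof -
  have "card {0::'a, 1} \<le> CARD('a)" by (rule card_mono) auto
  then show ?thesis by simp
qed

lemma PG_point_eq_span:
  assumes "P \<in> PG_points" "x \<in> P" "x \<noteq> 0"
  shows "P = vec.span {x}"
proof -
  have "vec.dim (vec.span {x}) = 1"
    using assms(3) by (simp add: vec.dim_span_eq_card_independent vec.independent_insert)
  moreover have "vec.span {x} \<subseteq> P"
    using assms(1,2) by (intro vec.span_minimal) (auto simp: PG_points_def)
  ultimately show ?thesis
    using assms(1) vec.subspace_dim_equal[of "vec.span {x}" P] by (simp add: PG_points_def)
qed

lemma PG_points_iff: "P \<in> PG_points \<longleftrightarrow> (\<exists>v. v \<noteq> 0 \<and> P = vec.span {v})"
proof
  assume P: "P \<in> PG_points"
  then have "P \<noteq> {0}" by (auto simp: PG_points_def)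
  moreover have "0 \<in> P" using P by (simp add: PG_points_def vec.subspace_0)
  ultimately obtain v where "v \<in> P" "v \<noteq> 0" by blast
  then show "\<exists>v. v \<noteq> 0 \<and> P = vec.span {v}" using P PG_point_eq_span by blast
next
  assume "\<exists>v. v \<noteq> 0 \<and> P = vec.span {v}"
  then obtain v where v: "v \<noteq> 0" "P = vec.span {v}" by blast
  then have "vec.dim P = 1"
    by (simp add: vec.dim_span_eq_card_independent vec.independent_insert)
  then show "P \<in> PG_points" using v(2) by (simp add: PG_points_def)
qed

lemma PG_pointE:
  assumes "P \<in> PG_points"
  obtains v where "v \<noteq> 0" "P = vec.span {v}"
  using assms unfolding PG_points_iff by blast

definition points_in :: "('a::field ^ 'n) set \<Rightarrow> ('a ^ 'n) set set" where
  "points_in V = {P \<in> PG_points. P \<subseteq> V}"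

lemma PG_blocks_eq: "PG_blocks d = {points_in W | W. vec.subspace W \<and> vec.dim W = d + 1}"
  by (simp add: PG_blocks_def points_in_def)

text \<open>The nonzero vectors of V are partitioned by the points of V, each contributing q - 1.\<close>
lemma card_points_in:
  fixes V :: "('a::{field,finite} ^ 'n) set"
  assumes "vec.subspace V"
  shows "card (points_in V) = q_number CARD('a) (vec.dim V)"
proof -
  have cover: "V - {0} = (\<Union>P\<in>points_in V. P - {0})"
  proof
    show "V - {0} \<subseteq> (\<Union>P\<in>points_in V. P - {0})"
    proof
      fix x assume x: "x \<in> V - {0}"
      have "vec.span {x} \<subseteq> V"
        using assms x by (intro vec.span_minimal) auto
      then have "vec.span {x} \<in> points_in V"
        using x PG_points_iff by (auto simp: points_in_def)
      moreover have "x \<in> vec.span {x}" by (rule vec.span_base) simp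
      ultimately show "x \<in> (\<Union>P\<in>points_in V. P - {0})" using x by blast
    qed
  qed (auto simp: points_in_def)
  have disjoint: "(P - {0}) \<inter> (P' - {0}) = {}"
    if "P \<in> points_in V" "P' \<in> points_in V" "P \<noteq> P'" for P P'
  proof (rule ccontr)
    assume "(P - {0}) \<inter> (P' - {0}) \<noteq> {}"
    then obtain x where "x \<in> P" "x \<in> P'" "x \<noteq> 0" by blast
    then have "P = vec.span {x}" "P' = vec.span {x}"
      using that(1,2) PG_point_eq_span by (auto simp: points_in_def)
    with \<open>P \<noteq> P'\<close> show False by simp
  qed
  have "card (V - {0}) = (\<Sum>P\<in>points_in V. card (P - {0}))"
    unfolding cover by (rule card_UN_disjoint) (use disjoint in auto)
  also have "\<dots> = (\<Sum>P\<in>points_in V. CARD('a) - 1)"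
  proof (rule sum.cong[OF refl])
    fix P assume "P \<in> points_in V"
    then have "vec.subspace P" "vec.dim P = 1" by (auto simp: points_in_def PG_points_def)
    then show "card (P - {0}) = CARD('a) - 1"
      by (simp add: card_subspace vec.subspace_0)
  qed
  finally have "card (points_in V) * (CARD('a) - 1) = CARD('a) ^ vec.dim V - 1"
    using assms by (simp add: card_subspace vec.subspace_0)
  moreover have "CARD('a) - 1 \<noteq> 0" using two_le_card_field[where 'a = 'a] by simp
  ultimately show ?thesis
    unfolding q_number_def by (metis nonzero_mult_div_cancel_right)
qed

lemma card_PG_points:
  assumes "CARD('n) = n + 1"
  shows "card (PG_points :: ('a::{field,finite} ^ 'n) set set) = q_number CARD('a) (n + 1)"
  using card_points_in[of "UNIV :: ('a ^ 'n) set"] vec_dim_card[where 'a = 'a and 'n = 'n] assms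
  by (simp add: points_in_def)

section \<open>Points off hyperplanes and the block criterion\<close>

definition points_off :: "('a::field ^ 'n) set set \<Rightarrow> ('a ^ 'n) set \<Rightarrow> ('a ^ 'n) set set" where
  "points_off S Q = {P \<in> S. \<not> P \<subseteq> orth Q}"

lemma points_off_span: "points_off S (vec.span X) = points_off S X"
  by (simp add: points_off_def orth_span)

lemma span_subset_orth_span_iff: "vec.span {x} \<subseteq> orth (vec.span {y}) \<longleftrightarrow> dot x y = 0"
  unfolding span_subset_orth_iff orth_span by (simp add: orth_def dot_comm)

lemma card_points_off_points_in:
  fixes W :: "('a::{field,finite} ^ 'n) set"
  assumes "vec.subspace W" "vec.dim W = d + 1"
  shows "card (points_off (points_in W) {u}) \<in> {0, CARD('a) ^ d}"
proof (cases "W \<subseteq> orth {u}")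
  case True
  then have "points_off (points_in W) {u} = {}"
    by (auto simp: points_off_def points_in_def)
  then show ?thesis by simp
next
  case False
  let ?q = "CARD('a)"
  let ?K = "W \<inter> orth {u}"
  have q: "2 \<le> ?q" by (rule two_le_card_field)
  have K: "vec.subspace ?K"
    using assms(1) subspace_orth by (rule vec.subspace_inter)
  have "?q ^ vec.dim ?K * ?q = ?q ^ d * ?q"
    using card_subspace_Int_hyperplane[OF assms(1) False] assms(2)
    by (simp add: card_subspace[OF K] card_subspace[OF assms(1)])
  then have dim_K: "vec.dim ?K = d"
    using q by (simp add: power_inject_exp)
  have "points_off (points_in W) {u} = points_in W - points_in ?K"
    by (auto simp: points_off_def points_in_def)
  moreover have "points_in ?K \<subseteq> points_in W"
    by (auto simp: points_in_def)
  ultimately have "card (points_off (points_in W) {u}) = q_number ?q (d + 1) - q_number ?q d"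
    using assms dim_K by (simp add: card_Diff_subset card_points_in[OF K] card_points_in[OF assms(1)])
  then show ?thesis
    using q_number_Suc[OF q] by simp
qed

lemma sum_card_points_off:
  fixes S :: "('a::{field,finite} ^ 'n) set set"
  assumes "CARD('n) = n + 1" "S \<subseteq> PG_points"
  shows "(\<Sum>u\<in>UNIV. card (points_off S {u})) = card S * (CARD('a) ^ (n + 1) - CARD('a) ^ n)"
proof -
  let ?q = "CARD('a)"
  have off_point: "card {u. \<not> P \<subseteq> orth {u}} = ?q ^ (n + 1) - ?q ^ n" if "P \<in> S" for P
  proof -
    have "P \<in> PG_points" using that assms(2) by blast
    then obtain p where p: "p \<noteq> 0" "P = vec.span {p}" by (rule PG_pointE)
    have "P \<subseteq> orth {u} \<longleftrightarrow> u \<in> orth {p}" for u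
      unfolding p(2) span_subset_orth_iff by (simp add: orth_def dot_comm)
    then have "{u. \<not> P \<subseteq> orth {u}} = UNIV - orth {p}" by blast
    moreover have "card (orth {p}) * ?q = ?q ^ n * ?q"
      using card_orth_singleton[OF p(1)] assms(1) by simp
    then have "card (orth {p}) = ?q ^ n" by simp
    ultimately show ?thesis
      using assms(1) by (simp add: card_Diff_subset)
  qed
  have "(\<Sum>u\<in>UNIV. card (points_off S {u})) = (\<Sum>u\<in>UNIV. \<Sum>P\<in>S. if \<not> P \<subseteq> orth {u} then 1 else 0)"
    by (simp add: points_off_def sum.If_cases Int_def)
  also have "\<dots> = (\<Sum>P\<in>S. \<Sum>u\<in>UNIV. if \<not> P \<subseteq> orth {u} then 1 else 0)"
    by (rule sum.swap)
  also have "\<dots> = (\<Sum>P\<in>S. card {u. \<not> P \<subseteq> orth {u}})"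
    by (simp add: sum.If_cases Int_def)
  also have "\<dots> = card S * (?q ^ (n + 1) - ?q ^ n)"
    using off_point by simp
  finally show ?thesis .
qed

text \<open>Double counting the pairs (u, P) with P \<in> S not contained in the hyperplane orth {u}:
  each point lies off q^(n+1) - q^n of them, while each u contributes 0 or q^d, and the u
  contributing 0 are exactly those orthogonal to all of S.\<close>
lemma card_orth_Union:
  fixes S :: "('a::{field,finite} ^ 'n) set set"
  assumes "CARD('n) = n + 1" "d \<le> n" "S \<subseteq> PG_points" "card S = q_number CARD('a) (d + 1)"
    and off: "\<And>u. card (points_off S {u}) \<in> {0, CARD('a) ^ d}"
  shows "card (orth (\<Union>S)) = CARD('a) ^ (n - d)"
proof -
  let ?q = "CARD('a)"
  define k where "k = q_number ?q (d + 1)"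
  define t where "t = card (orth (\<Union>S))"
  have q: "2 \<le> ?q" by (rule two_le_card_field)
  have support: "{u. points_off S {u} \<noteq> {}} = UNIV - orth (\<Union>S)"
    by (auto simp: points_off_def subset_orth_commute[of _ "{_}"] orth_Union)
  have "(\<Sum>u\<in>UNIV. card (points_off S {u})) = (\<Sum>u\<in>UNIV. if points_off S {u} \<noteq> {} then ?q ^ d else 0)"
    using off by (intro sum.cong) auto
  also have "\<dots> = ?q ^ d * card (UNIV - orth (\<Union>S))"
    unfolding support[symmetric] by (simp add: sum.If_cases Int_def)
  also have "card (UNIV - orth (\<Union>S)) = ?q ^ (n + 1) - t"
    using card_Diff_subset[of "orth (\<Union>S)" UNIV] assms(1) by (simp add: t_def)
  finally have count: "k * (?q ^ (n + 1) - ?q ^ n) = ?q ^ d * (?q ^ (n + 1) - t)"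
    using sum_card_points_off[OF assms(1,3)] assms(4) by (simp add: k_def)
  have "t \<le> ?q ^ (n + 1)" "?q ^ n \<le> ?q ^ (n + 1)"
    using card_mono[of UNIV "orth (\<Union>S)"] assms(1) q by (simp_all add: t_def)
  then have "int k * (int ?q ^ (n + 1) - int ?q ^ n) = int ?q ^ d * (int ?q ^ (n + 1) - int t)"
    using arg_cong[OF count, of int] by (simp add: of_nat_diff)
  moreover have "int k * (int ?q - 1) = int ?q ^ (d + 1) - 1"
    using arg_cong[OF q_number_mult[OF q, of "d + 1"], of int] q by (simp add: k_def of_nat_diff)
  moreover have "int k * (int ?q ^ (n + 1) - int ?q ^ n) = int k * (int ?q - 1) * int ?q ^ n"
    by (simp add: algebra_simps)
  ultimately have "(int ?q ^ (d + 1) - 1) * int ?q ^ n = int ?q ^ d * (int ?q ^ (n + 1) - int t)"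
    by simp
  then have "int ?q ^ d * int t = int ?q ^ n"
    by (simp add: algebra_simps power_add)
  also have "\<dots> = int ?q ^ d * int ?q ^ (n - d)"
    using assms(2) by (simp flip: power_add)
  finally show ?thesis
    using q by (simp add: t_def flip: of_nat_power)
qed

lemma PG_blocks_if_card_points_off:
  fixes S :: "('a::{field,finite} ^ 'n) set set"
  assumes "CARD('n) = n + 1" "d \<le> n" "S \<subseteq> PG_points" "card S = q_number CARD('a) (d + 1)"
    and "\<And>u. card (points_off S {u}) \<in> {0, CARD('a) ^ d}"
  shows "S \<in> PG_blocks d"
proof -
  let ?q = "CARD('a)"
  have q: "2 \<le> ?q" by (rule two_le_card_field)
  define W where "W = vec.span (\<Union>S)"
  have W: "vec.subspace W" by (simp add: W_def)
  have "?q ^ (n - d + vec.dim W) \<le> ?q ^ (n + 1)"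
    using card_orth_mult_le[of W] card_orth_Union[OF assms] assms(1)
    by (simp add: W_def orth_span power_add)
  then have "n - d + vec.dim W \<le> n + 1"
    by (rule power_le_imp_le_exp[rotated]) (use q in simp)
  then have upper: "vec.dim W \<le> d + 1" using assms(2) by simp
  have S_W: "S \<subseteq> points_in W"
    using assms(3) vec.span_superset[of "\<Union>S"] by (auto simp: points_in_def W_def)
  then have "q_number ?q (d + 1) \<le> q_number ?q (vec.dim W)"
    using assms(4) card_mono[of "points_in W" S] card_points_in[OF W] by simp
  then have "d + 1 \<le> vec.dim W"
    using strict_mono_q_number[OF q] by (simp add: strict_mono_less_eq)
  with upper have dim_W: "vec.dim W = d + 1" by simp
  then have "S = points_in W"
    using S_W assms(4) card_points_in[OF W] by (intro card_subset_eq) simp_all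
  then show ?thesis
    using W dim_W by (auto simp: PG_blocks_eq)
qed

lemma PG_blocks_iff_dvd_card_points_off:
  fixes S :: "('a::{field,finite} ^ 'n) set set"
  assumes "CARD('n) = n + 1" "d \<le> n" "S \<subseteq> PG_points" "card S = q_number CARD('a) (d + 1)"
  shows "S \<in> PG_blocks d \<longleftrightarrow> (\<forall>Q\<in>PG_points. CARD('a) ^ d dvd card (points_off S Q))"
proof
  assume "S \<in> PG_blocks d"
  then obtain W where W: "vec.subspace W" "vec.dim W = d + 1" "S = points_in W"
    by (auto simp: PG_blocks_eq)
  show "\<forall>Q\<in>PG_points. CARD('a) ^ d dvd card (points_off S Q)"
  proof
    fix Q :: "('a ^ 'n) set" assume "Q \<in> PG_points"
    then obtain u where "Q = vec.span {u}" by (rule PG_pointE)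
    then show "CARD('a) ^ d dvd card (points_off S Q)"
      using card_points_off_points_in[OF W(1,2), of u] W(3) by (auto simp: points_off_span)
  qed
next
  let ?q = "CARD('a)"
  assume dvd: "\<forall>Q\<in>PG_points. ?q ^ d dvd card (points_off S Q)"
  have "card (points_off S {u}) \<in> {0, ?q ^ d}" for u
  proof (cases "u = 0")
    case True
    then show ?thesis by (simp add: points_off_def orth_def)
  next
    case False
    then have "vec.span {u} \<in> PG_points" by (auto simp: PG_points_iff)
    with dvd obtain r where r: "card (points_off S {u}) = ?q ^ d * r"
      by (metis points_off_span dvdE)
    have q: "2 \<le> ?q" by (rule two_le_card_field)
    have "card (points_off S {u}) \<le> card S"
      by (rule card_mono) (auto simp: points_off_def)
    also have "\<dots> < ?q ^ d * 2"
      using assms(4) q_number_Suc[OF q, of d] q_number_less_power[OF q, of d] by simp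
    finally have "r < 2" using r by simp
    then show ?thesis using r by (auto simp: less_2_cases_iff)
  qed
  then show "S \<in> PG_blocks d"
    by (rule PG_blocks_if_card_points_off[OF assms])
qed

lemma PG_points_separated:
  assumes "P \<in> PG_points" "P' \<in> PG_points" "P \<noteq> P'"
  shows "\<exists>Q\<in>PG_points. \<not> P \<subseteq> orth Q \<and> P' \<subseteq> orth Q"
proof -
  obtain p where p: "p \<noteq> 0" "P = vec.span {p}" using assms(1) by (rule PG_pointE)
  obtain p' where p': "p' \<noteq> 0" "P' = vec.span {p'}" using assms(2) by (rule PG_pointE)
  have "p \<notin> vec.span {p'}"
    using PG_point_eq_span[OF assms(2) _ p(1)] p' p(2) assms(3) by auto
  then have "vec.independent {p, p'}"
    using p'(1) by (auto simp: vec.independent_insert vec.span_base)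
  then obtain u where u: "\<forall>b\<in>{p, p'}. dot b u = (if b = p then 1 else 0)"
    using ex_dot_eq_on_independent[of _ "\<lambda>b. if b = p then 1 else 0"] by blast
  have "p \<noteq> p'" using \<open>p \<notin> vec.span {p'}\<close> vec.span_base by blast
  then have "dot p u = 1" "dot p' u = 0" using u by auto
  then have "u \<noteq> 0" by auto
  then show ?thesis
    using \<open>dot p u = 1\<close> \<open>dot p' u = 0\<close> p(2) p'(2)
    by (intro bexI[of _ "vec.span {u}"]) (auto simp: span_subset_orth_span_iff PG_points_iff)
qed

section \<open>Zero sums in Z_M^N\<close>

lemma comm_group_Zmod_power: "comm_group (Zmod_power M N)"
proof -
  interpret group "Zmod_power M N"
    unfolding Zmod_power_def by (rule product_group) simp
  show ?thesis
    by (rule group_comm_groupI) (auto simp: Zmod_power_def add.commute)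
qed

lemma finprod_Zmod_power:
  assumes "finite A" "f \<in> A \<rightarrow> carrier (Zmod_power M N)"
  shows "finprod (Zmod_power M N) f A = (\<lambda>j\<in>{..<N}. (\<Sum>a\<in>A. f a j) mod int M)"
  using assms
proof (induction A rule: finite_induct)
  case empty
  interpret comm_group "Zmod_power M N" by (rule comm_group_Zmod_power)
  have "finprod (Zmod_power M N) f {} = \<one>\<^bsub>Zmod_power M N\<^esub>" by simp
  then show ?case by (simp add: Zmod_power_def restrict_def)
next
  case (insert x F)
  interpret comm_group "Zmod_power M N" by (rule comm_group_Zmod_power)
  have "finprod (Zmod_power M N) f (insert x F) = f x \<otimes>\<^bsub>Zmod_power M N\<^esub> finprod (Zmod_power M N) f F"
    using insert by (intro finprod_insert) auto
  then show ?case
    using insert by (auto simp: Zmod_power_def mod_add_right_eq intro!: ext)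
qed

lemma zero_sum_image_Zmod_power_iff:
  assumes "finite A" "f \<in> A \<rightarrow> carrier (Zmod_power M N)" "inj_on f A"
  shows "zero_sum (Zmod_power M N) (f ` A) \<longleftrightarrow> (\<forall>j<N. int M dvd (\<Sum>a\<in>A. f a j))"
proof -
  interpret comm_group "Zmod_power M N" by (rule comm_group_Zmod_power)
  have "finprod (Zmod_power M N) (\<lambda>x. x) (f ` A) = finprod (Zmod_power M N) f A"
    using finprod_reindex[of "\<lambda>x. x" f A] assms by auto
  also have "\<dots> = (\<lambda>j\<in>{..<N}. (\<Sum>a\<in>A. f a j) mod int M)"
    by (rule finprod_Zmod_power[OF assms(1,2)])
  finally show ?thesis
    unfolding zero_sum_def by (auto simp: Zmod_power_def fun_eq_iff dvd_eq_mod_eq_0)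
qed

text \<open>The witness sends v to its incidence vector with respect to the tests T j.\<close>
lemma strongly_additive_Zmod_powerI:
  fixes T :: "nat \<Rightarrow> 'v set"
  assumes "finite V" "2 \<le> M"
    and separating: "\<And>v w. v \<in> V \<Longrightarrow> w \<in> V \<Longrightarrow> v \<noteq> w \<Longrightarrow> \<exists>j<N. v \<in> T j \<and> w \<notin> T j"
    and blocks: "\<And>S. S \<subseteq> V \<Longrightarrow> card S = k \<Longrightarrow> S \<in> B \<longleftrightarrow> (\<forall>j<N. M dvd card (S \<inter> T j))"
  shows "strongly_additive (Zmod_power M N) V B k"
proof -
  define f where "f v = (\<lambda>j\<in>{..<N}. if v \<in> T j then 1 else 0 :: int)" for v
  have carrier: "f \<in> V \<rightarrow> carrier (Zmod_power M N)"
    using assms(2) by (auto simp: f_def Zmod_power_def carrier_integer_mod_group)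
  have inj: "inj_on f V"
  proof (rule inj_onI, rule ccontr)
    fix v w assume "v \<in> V" "w \<in> V" "f v = f w" "v \<noteq> w"
    then obtain j where "j < N" "v \<in> T j" "w \<notin> T j" using separating by blast
    then have "f v j \<noteq> f w j" by (simp add: f_def)
    with \<open>f v = f w\<close> show False by simp
  qed
  have zero_sum_iff: "zero_sum (Zmod_power M N) (f ` S) \<longleftrightarrow> (\<forall>j<N. M dvd card (S \<inter> T j))"
    if "S \<subseteq> V" for S
  proof -
    have "finite S" using finite_subset[OF that assms(1)] .
    then have "(\<Sum>v\<in>S. f v j) = int (card (S \<inter> T j))" if "j < N" for j
      using that by (simp add: f_def sum.If_cases Int_def)
    moreover have "f \<in> S \<rightarrow> carrier (Zmod_power M N)" "inj_on f S"
      using carrier inj \<open>S \<subseteq> V\<close> by (auto intro: inj_on_subset)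
    ultimately show ?thesis
      using zero_sum_image_Zmod_power_iff[OF \<open>finite S\<close>] by simp
  qed
  show ?thesis
    unfolding strongly_additive_def
    by (intro exI[of _ f] conjI carrier inj allI impI) (simp add: blocks zero_sum_iff)
qed

theorem theorem4p1:
  fixes n d :: nat
  assumes "CARD('n::finite) = n + 1"
    and "1 \<le> d" and "d \<le> n - 1"
  shows "strongly_additive
           (Zmod_power (CARD('a::{field,finite}) ^ d) (q_number CARD('a) (n + 1)))
           (PG_points :: ('a ^ 'n) set set)
           (PG_blocks d)
           (q_number CARD('a) (d + 1))"
proof -
  let ?q = "CARD('a)"
  let ?N = "q_number ?q (n + 1)"
  obtain Q where "bij_betw Q {..<?N} (PG_points :: ('a ^ 'n) set set)"
    using ex_bij_betw_nat_finite[of "PG_points :: ('a ^ 'n) set set"] card_PG_points[where 'a = 'a, OF assms(1)]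
    by (auto simp: lessThan_atLeast0)
  then have points_eq: "PG_points = Q ` {..<?N}"
    by (simp add: bij_betw_def)
  show ?thesis
  proof (rule strongly_additive_Zmod_powerI[where T = "\<lambda>j. points_off PG_points (Q j)"])
    show "finite (PG_points :: ('a ^ 'n) set set)" by simp
    show "2 \<le> ?q ^ d"
      using two_le_card_field[where 'a = 'a] power_increasing[OF assms(2), of ?q] by simp
    fix P P' :: "('a ^ 'n) set" assume "P \<in> PG_points" "P' \<in> PG_points" "P \<noteq> P'"
    then obtain R where "R \<in> PG_points" "\<not> P \<subseteq> orth R" "P' \<subseteq> orth R"
      using PG_points_separated by blast
    with \<open>P \<in> PG_points\<close> show "\<exists>j<?N. P \<in> points_off PG_points (Q j) \<and> P' \<notin> points_off PG_points (Q j)"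
      unfolding points_eq by (auto simp: points_off_def)
  next
    fix S :: "('a ^ 'n) set set" assume S: "S \<subseteq> PG_points" "card S = q_number ?q (d + 1)"
    have off_S: "S \<inter> points_off PG_points R = points_off S R" for R
      using S(1) by (auto simp: points_off_def)
    have "S \<in> PG_blocks d \<longleftrightarrow> (\<forall>R\<in>PG_points. ?q ^ d dvd card (points_off S R))"
      by (rule PG_blocks_iff_dvd_card_points_off[OF assms(1) _ S]) (use assms(3) in simp)
    also have "\<dots> \<longleftrightarrow> (\<forall>j<?N. ?q ^ d dvd card (points_off S (Q j)))"
      unfolding points_eq by auto
    finally show "S \<in> PG_blocks d \<longleftrightarrow> (\<forall>j<?N. ?q ^ d dvd card (S \<inter> points_off PG_points (Q j)))"
      by (simp add: off_S)
  qed
qed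

end
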